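(* Let $(X_i)_{i\in\mathbb N}$ be independent real random variables with $\mathbb E[X_i]=0$ for all $i$ and $\sup_{i\in\mathbb N}\mathbb E\big[\exp\{K(\log^+|X_i|)^\gamma\}\big]<\infty$ for some $K>0$ and $\gamma>1$, where $\log^+x=\max(\log x,0)$. Then for every $\varepsilon>0$ there is $c>0$ such that $$\mathbb P\Big(\exists\, k\ge n:\ \Big|\sum_{i=1}^kX_i\Big|>\varepsilon k\Big)\le c^{-1}e^{-c\log^\gamma n}\qquad\forall n\in\mathbb N.$$ *)

theory Defs
  imports "HOL-Probability.Probability"
begin

definition log_plus :: "real \<Rightarrow> real" where
  "log_plus x = max (ln x) 0"

end

theory Submission
  imports Defs "HOL-Real_Asymp.Real_Asymp"
begin

text \<open>Truncate each \<open>X\<^sub>i\<close> at level \<open>T = k\<^sup>1\<^sup>/\<^sup>4\<close>. The truncated summands are bounded, so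
  Hoeffding's inequality bounds the deviation of their sum by \<open>exp (-\<epsilon>\<^sup>2 \<surd>k / 8)\<close>; their means are
  at most \<open>B / T\<close> by the moment bound (because \<open>y\<^sup>2 \<le> exp (K log\<^sup>+\<^sup>\<gamma> y)\<close> for large \<open>y\<close>), and the
  event that some summand exceeds \<open>T\<close> has probability at most \<open>k B exp (-K (log k / 4)\<^sup>\<gamma>)\<close> by
  Markov's inequality. Since \<open>\<gamma> > 1\<close>, both bounds are eventually \<open>\<le> exp (-c log\<^sup>\<gamma> k) / k\<^sup>2\<close>, and
  a union bound over \<open>k \<ge> n\<close> finishes the proof.\<close>

definition truncate_abs :: "real \<Rightarrow> real \<Rightarrow> real" where
  "truncate_abs T x = (if \<bar>x\<bar> \<le> T then x else 0)"

definition exp_log_plus_pow :: "real \<Rightarrow> real \<Rightarrow> real \<Rightarrow> real" where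
  "exp_log_plus_pow K \<gamma> x = exp (K * log_plus \<bar>x\<bar> powr \<gamma>)"

lemma borel_measurable_truncate_abs [measurable]: "truncate_abs T \<in> borel_measurable borel"
  unfolding truncate_abs_def by measurable

lemma log_plus_nonneg: "0 \<le> log_plus x"
  by (simp add: log_plus_def)

lemma log_plus_mono: "0 \<le> x \<Longrightarrow> x \<le> y \<Longrightarrow> log_plus x \<le> log_plus y"
  unfolding log_plus_def by (cases "x = 0") (auto intro!: max.coboundedI1 ln_mono)

lemma log_plus_eq_ln: "1 \<le> x \<Longrightarrow> log_plus x = ln x"
  by (simp add: log_plus_def)

lemma exp_log_plus_pow_pos [simp]: "0 < exp_log_plus_pow K \<gamma> x"
  by (simp add: exp_log_plus_pow_def)

lemma exp_log_plus_pow_abs [simp]: "exp_log_plus_pow K \<gamma> \<bar>x\<bar> = exp_log_plus_pow K \<gamma> x"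
  by (simp add: exp_log_plus_pow_def)

lemma borel_measurable_exp_log_plus_pow [measurable]: "exp_log_plus_pow K \<gamma> \<in> borel_measurable borel"
  unfolding exp_log_plus_pow_def log_plus_def by measurable

lemma exp_log_plus_pow_ge_1: "0 \<le> K \<Longrightarrow> 1 \<le> exp_log_plus_pow K \<gamma> x"
  by (simp add: exp_log_plus_pow_def)

lemma exp_log_plus_pow_mono:
  assumes "0 \<le> K" "0 \<le> \<gamma>" "\<bar>x\<bar> \<le> \<bar>y\<bar>"
  shows "exp_log_plus_pow K \<gamma> x \<le> exp_log_plus_pow K \<gamma> y"
proof -
  have "log_plus \<bar>x\<bar> powr \<gamma> \<le> log_plus \<bar>y\<bar> powr \<gamma>"
    using assms by (intro powr_mono2 log_plus_mono log_plus_nonneg) auto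
  thus ?thesis
    using assms(1) by (simp add: exp_log_plus_pow_def mult_left_mono)
qed

lemma exp_log_plus_pow_ge_square:
  assumes "0 < K" "1 < \<gamma>"
  obtains T0 where "\<And>y. T0 \<le> y \<Longrightarrow> y\<^sup>2 \<le> exp_log_plus_pow K \<gamma> y"
proof -
  have "eventually (\<lambda>y. 1 \<le> y \<and> y\<^sup>2 \<le> exp (K * ln y powr \<gamma>)) at_top"
    using assms by (intro eventually_conj; real_asymp)
  then obtain T0 where T0: "\<And>y. T0 \<le> y \<Longrightarrow> 1 \<le> y \<and> y\<^sup>2 \<le> exp (K * ln y powr \<gamma>)"
    by (auto simp: eventually_at_top_linorder)
  show ?thesis
  proof (rule that)
    fix y assume "T0 \<le> y"
    with T0 have "1 \<le> y" "y\<^sup>2 \<le> exp (K * ln y powr \<gamma>)"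
      by auto
    thus "y\<^sup>2 \<le> exp_log_plus_pow K \<gamma> y"
      by (simp add: exp_log_plus_pow_def log_plus_eq_ln)
  qed
qed

lemma exists_uniform_exp_bound:
  fixes p L :: "nat \<Rightarrow> real"
  assumes "\<And>n. p n \<le> 1" and "\<And>n. N \<le> n \<Longrightarrow> p n \<le> C * exp (- c0 * L n)"
    and "0 < c0" "0 \<le> C" "\<And>n. 0 \<le> L n" "0 \<le> D" "\<And>n. n < N \<Longrightarrow> L n \<le> D"
  shows "\<exists>c>0. \<forall>n. p n \<le> 1 / c * exp (- c * L n)"
proof (intro exI conjI allI)
  define c where "c = min c0 (1 / (C + D + 1))"
  show c: "0 < c"
    using assms by (simp add: c_def)
  have "c \<le> 1 / (C + D + 1)"
    by (simp add: c_def)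
  hence "C + D + 1 \<le> 1 / c"
    using c assms(4,6) by (simp add: le_divide_eq mult.commute)
  fix n
  show "p n \<le> 1 / c * exp (- c * L n)"
  proof (cases "N \<le> n")
    case True
    have "exp (- c0 * L n) \<le> exp (- c * L n)"
      using assms(5) by (simp add: c_def mult_right_mono)
    moreover have "C \<le> 1 / c"
      using \<open>C + D + 1 \<le> 1 / c\<close> assms(6) by linarith
    ultimately have "C * exp (- c0 * L n) \<le> 1 / c * exp (- c * L n)"
      using assms(4) c by (intro mult_mono) auto
    with True assms(2) show ?thesis
      by (meson order_trans)
  next
    case False
    \<comment> \<open>\<open>(1/c) exp (-c L) \<ge> (1/c) (1 - c D) = 1/c - D \<ge> 1\<close>\<close>
    have "c * L n \<le> c * D"
      using assms(7) False c by (simp add: mult_left_mono)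
    hence "1 - c * D \<le> exp (- c * L n)"
      using exp_ge_add_one_self[of "- c * L n"] by linarith
    hence "1 / c * (1 - c * D) \<le> 1 / c * exp (- c * L n)"
      using c by (simp add: divide_right_mono)
    moreover have "1 / c * (1 - c * D) = 1 / c - D"
      using c by (simp add: field_simps)
    ultimately show ?thesis
      using assms(1)[of n] \<open>C + D + 1 \<le> 1 / c\<close> assms(4) by linarith
  qed
qed

lemma integrable_integral_le_of_SUP_nn_integral_less_top:
  fixes f :: "'i \<Rightarrow> 'a \<Rightarrow> real"
  assumes "(SUP i. \<integral>\<^sup>+ x. ennreal (f i x) \<partial>M) < \<infinity>"
    and "\<And>i. f i \<in> borel_measurable M" "\<And>i x. 0 \<le> f i x"
  obtains B where "\<And>i. integrable M (f i)" "\<And>i. integral\<^sup>L M (f i) \<le> B"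
proof -
  obtain B where B: "(SUP i. \<integral>\<^sup>+ x. ennreal (f i x) \<partial>M) = ennreal B" "0 \<le> B"
    using assms(1) less_top_ennreal by (metis infinity_ennreal_def)
  have le: "(\<integral>\<^sup>+ x. ennreal (f i x) \<partial>M) \<le> ennreal B" for i
    unfolding B(1)[symmetric] by (rule SUP_upper) simp
  have int: "integrable M (f i)" for i
    using le[of i] assms(2,3) by (intro integrableI_nonneg) (auto simp: le_less_trans)
  have "integral\<^sup>L M (f i) \<le> B" for i
  proof -
    have "integral\<^sup>L M (f i) = enn2real (\<integral>\<^sup>+ x. ennreal (f i x) \<partial>M)"
      using assms(2,3) by (intro integral_eq_nn_integral) auto
    also have "\<dots> \<le> B"
      using le[of i] B(2) by (metis enn2real_ennreal enn2real_mono ennreal_less_top)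
    finally show ?thesis .
  qed
  with int show ?thesis by (rule that)
qed

lemma summable_inverse_Suc_square: "summable (\<lambda>k. 1 / real (Suc k) ^ 2)"
proof -
  have "summable (\<lambda>k. 1 / real k ^ 2)"
    using inverse_power_summable[of 2, where 'a = real] by (simp add: inverse_eq_divide)
  thus ?thesis
    using summable_Suc_iff[where f = "\<lambda>k. 1 / real k ^ 2"] by simp
qed

lemma ln_powr_mono: "0 \<le> \<gamma> \<Longrightarrow> m \<le> n \<Longrightarrow> ln (real m) powr \<gamma> \<le> ln (real n) powr \<gamma>"
  by (cases "m = 0") (auto intro!: powr_mono2)

context prob_space
begin

lemma prob_abs_gt_le_expectation:
  fixes X :: "'a \<Rightarrow> real" and g :: "real \<Rightarrow> real"
  assumes "integrable M (\<lambda>\<omega>. g (X \<omega>))" "\<And>x. 0 < g x" "\<And>x y. \<bar>x\<bar> \<le> \<bar>y\<bar> \<Longrightarrow> g x \<le> g y"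
    and "0 \<le> T"
  shows "prob {\<omega>\<in>space M. T < \<bar>X \<omega>\<bar>} \<le> expectation (\<lambda>\<omega>. g (X \<omega>)) / g T"
proof -
  have [measurable]: "(\<lambda>\<omega>. g (X \<omega>)) \<in> borel_measurable M"
    using assms(1) by (rule borel_measurable_integrable)
  have "g T \<le> g (X \<omega>)" if "T < \<bar>X \<omega>\<bar>" for \<omega>
    using that assms(4) by (intro assms(3)) simp
  hence "prob {\<omega>\<in>space M. T < \<bar>X \<omega>\<bar>} \<le> prob {\<omega>\<in>space M. g T \<le> g (X \<omega>)}"
    by (intro finite_measure_mono) auto
  also have "\<dots> \<le> expectation (\<lambda>\<omega>. g (X \<omega>)) / g T"
    using assms(1,2) by (intro integral_Markov_inequality_measure[where A = "space M"])
      (auto intro: less_imp_le)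
  finally show ?thesis .
qed

lemma abs_expectation_truncate_abs_le:
  fixes X :: "'a \<Rightarrow> real" and g :: "real \<Rightarrow> real"
  assumes X: "integrable M X" "expectation X = 0"
    and g: "integrable M (\<lambda>\<omega>. g (X \<omega>))" "\<And>x. 0 \<le> g x"
    and "0 < T" and tail: "\<And>x. T < \<bar>x\<bar> \<Longrightarrow> T * \<bar>x\<bar> \<le> g x"
  shows "\<bar>expectation (\<lambda>\<omega>. truncate_abs T (X \<omega>))\<bar> \<le> expectation (\<lambda>\<omega>. g (X \<omega>)) / T"
proof -
  define Z where "Z \<omega> = X \<omega> - truncate_abs T (X \<omega>)" for \<omega>
  have [measurable]: "X \<in> borel_measurable M"
    using X(1) by (rule borel_measurable_integrable)
  have Z_bound: "\<bar>Z \<omega>\<bar> \<le> g (X \<omega>) / T" for \<omega>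
    using tail[of "X \<omega>"] g(2)[of "X \<omega>"] \<open>0 < T\<close>
    by (auto simp: Z_def truncate_abs_def field_simps)
  have [measurable]: "Z \<in> borel_measurable M"
    unfolding Z_def[abs_def] by measurable
  have Z: "integrable M Z"
    using X(1) by (rule Bochner_Integration.integrable_bound) (auto simp: Z_def truncate_abs_def)
  have "(\<lambda>\<omega>. truncate_abs T (X \<omega>)) = (\<lambda>\<omega>. X \<omega> - Z \<omega>)"
    by (simp add: Z_def)
  hence "expectation (\<lambda>\<omega>. truncate_abs T (X \<omega>)) = - expectation Z"
    using X Z by simp
  hence "\<bar>expectation (\<lambda>\<omega>. truncate_abs T (X \<omega>))\<bar> \<le> expectation (\<lambda>\<omega>. \<bar>Z \<omega>\<bar>)"
    using integral_abs_bound[of M Z] by simp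
  also have "\<dots> \<le> expectation (\<lambda>\<omega>. g (X \<omega>) / T)"
    using Z g(1) by (intro integral_mono Z_bound) auto
  finally show ?thesis by simp
qed

lemma prob_abs_sum_gt_le_truncation:
  fixes X :: "'i \<Rightarrow> 'a \<Rightarrow> real" and T t :: real
  assumes indep: "indep_vars (\<lambda>_. borel) X I" and I: "finite I" "I \<noteq> {}"
    and "0 < T" "0 < t"
    and bias: "(\<Sum>i\<in>I. \<bar>expectation (\<lambda>\<omega>. truncate_abs T (X i \<omega>))\<bar>) \<le> t / 2"
  shows "prob {\<omega>\<in>space M. t < \<bar>\<Sum>i\<in>I. X i \<omega>\<bar>}
           \<le> (\<Sum>i\<in>I. prob {\<omega>\<in>space M. T < \<bar>X i \<omega>\<bar>}) + 2 * exp (- (t\<^sup>2 / (8 * real (card I) * T\<^sup>2)))"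
proof -
  have rv: "X i \<in> borel_measurable M" if "i \<in> I" for i
    using indep that by (auto simp: indep_vars_def)
  have tail_events: "{\<omega>\<in>space M. T < \<bar>X i \<omega>\<bar>} \<in> events" if "i \<in> I" for i
  proof -
    note [measurable] = rv[OF that]
    show ?thesis by measurable
  qed
  define Y where "Y i \<omega> = truncate_abs T (X i \<omega>)" for i \<omega>
  have [measurable]: "(\<lambda>\<omega>. \<Sum>i\<in>I. Y i \<omega>) \<in> borel_measurable M"
    unfolding Y_def by (intro borel_measurable_sum measurable_compose[OF rv borel_measurable_truncate_abs])
  define \<mu> where "\<mu> = (\<Sum>i\<in>I. expectation (Y i))"
  have indep_Y: "indep_vars (\<lambda>_. borel) Y I"
    unfolding Y_def by (rule indep_vars_compose2[OF indep]) measurable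
  interpret Hoeffding_ineq M I Y "\<lambda>_. -T" "\<lambda>_. T" \<mu>
  proof unfold_locales
    fix i assume "i \<in> I"
    show "AE \<omega> in M. Y i \<omega> \<in> {-T..T}"
      using \<open>0 < T\<close> by (intro AE_I2) (auto simp: Y_def truncate_abs_def)
  qed (use I indep_Y in \<open>simp_all add: \<mu>_def\<close>)
  have "(\<Sum>i\<in>I. (T - - T)\<^sup>2) = 4 * real (card I) * T\<^sup>2"
    by (simp add: power2_eq_square)
  hence deviation: "prob {\<omega>\<in>space M. t / 2 \<le> \<bar>(\<Sum>i\<in>I. Y i \<omega>) - \<mu>\<bar>}
      \<le> 2 * exp (- (t\<^sup>2 / (8 * real (card I) * T\<^sup>2)))"
    using Hoeffding_ineq_abs_ge[of "t / 2"] \<open>0 < t\<close> \<open>0 < T\<close> I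
    by (simp add: power_divide card_gt_0_iff mult.assoc)
  have "\<bar>\<mu>\<bar> \<le> t / 2"
    unfolding \<mu>_def Y_def[abs_def] by (rule order.trans[OF sum_abs bias])
  have "{\<omega>\<in>space M. t < \<bar>\<Sum>i\<in>I. X i \<omega>\<bar>}
      \<subseteq> (\<Union>i\<in>I. {\<omega>\<in>space M. T < \<bar>X i \<omega>\<bar>}) \<union> {\<omega>\<in>space M. t / 2 \<le> \<bar>(\<Sum>i\<in>I. Y i \<omega>) - \<mu>\<bar>}"
  proof (intro subsetI)
    fix \<omega> assume \<omega>: "\<omega> \<in> {\<omega>\<in>space M. t < \<bar>\<Sum>i\<in>I. X i \<omega>\<bar>}"
    show "\<omega> \<in> (\<Union>i\<in>I. {\<omega>\<in>space M. T < \<bar>X i \<omega>\<bar>}) \<union> {\<omega>\<in>space M. t / 2 \<le> \<bar>(\<Sum>i\<in>I. Y i \<omega>) - \<mu>\<bar>}"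
    proof (cases "\<forall>i\<in>I. \<bar>X i \<omega>\<bar> \<le> T")
      case True
      hence "(\<Sum>i\<in>I. Y i \<omega>) = (\<Sum>i\<in>I. X i \<omega>)"
        by (simp add: Y_def truncate_abs_def)
      hence "t / 2 \<le> \<bar>(\<Sum>i\<in>I. Y i \<omega>) - \<mu>\<bar>"
        using \<omega> \<open>\<bar>\<mu>\<bar> \<le> t / 2\<close> abs_triangle_ineq2[of "\<Sum>i\<in>I. X i \<omega>" \<mu>] by simp
      thus ?thesis
        using \<omega> by simp
    qed (use \<omega> in \<open>auto simp: not_le\<close>)
  qed
  hence "prob {\<omega>\<in>space M. t < \<bar>\<Sum>i\<in>I. X i \<omega>\<bar>}
      \<le> prob (\<Union>i\<in>I. {\<omega>\<in>space M. T < \<bar>X i \<omega>\<bar>}) + prob {\<omega>\<in>space M. t / 2 \<le> \<bar>(\<Sum>i\<in>I. Y i \<omega>) - \<mu>\<bar>}"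
  proof -
    have "(\<Union>i\<in>I. {\<omega>\<in>space M. T < \<bar>X i \<omega>\<bar>}) \<in> events"
      using I tail_events by (intro sets.finite_UN) auto
    moreover have "{\<omega>\<in>space M. t / 2 \<le> \<bar>(\<Sum>i\<in>I. Y i \<omega>) - \<mu>\<bar>} \<in> events"
      by measurable
    ultimately show ?thesis
      using \<open>{\<omega>\<in>space M. t < \<bar>\<Sum>i\<in>I. X i \<omega>\<bar>} \<subseteq> _\<close>
      by (intro order.trans[OF finite_measure_mono measure_Un_le]) auto
  qed
  also have "prob (\<Union>i\<in>I. {\<omega>\<in>space M. T < \<bar>X i \<omega>\<bar>}) \<le> (\<Sum>i\<in>I. prob {\<omega>\<in>space M. T < \<bar>X i \<omega>\<bar>})"
    using I tail_events by (intro finite_measure_subadditive_finite) auto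
  finally show ?thesis
    using deviation by linarith
qed

lemma prob_Union_atLeast_le_inverse_square:
  assumes "1 \<le> n" "\<And>k. A k \<in> events" "\<And>k. n \<le> k \<Longrightarrow> prob (A k) \<le> Q / real k ^ 2"
  shows "prob (\<Union>k\<in>{n..}. A k) \<le> Q * (\<Sum>k. 1 / real (Suc k) ^ 2)"
proof -
  have "0 \<le> Q / real n ^ 2"
    using assms(3)[of n] measure_nonneg[of M "A n"] by linarith
  hence Q: "0 \<le> Q"
    using assms(1) by (simp add: zero_le_divide_iff)
  have shifted: "prob (A (k + n)) \<le> Q * (1 / real (Suc k) ^ 2)" for k
  proof -
    have "prob (A (k + n)) \<le> Q / real (k + n) ^ 2"
      by (rule assms(3)) simp
    also have "\<dots> \<le> Q / real (Suc k) ^ 2"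
      using Q assms(1) by (intro divide_left_mono power_mono) auto
    finally show ?thesis by simp
  qed
  have summable_bound: "summable (\<lambda>k. Q * (1 / real (Suc k) ^ 2))"
    by (rule summable_mult[OF summable_inverse_Suc_square])
  have summable_prob: "summable (\<lambda>k. prob (A (k + n)))"
    by (rule summable_comparison_test'[OF summable_bound, of 0]) (metis shifted abs_of_nonneg measure_nonneg real_norm_def)
  have "(\<Union>k\<in>{n..}. A k) = (\<Union>k. A (k + n))"
  proof (intro equalityI subsetI)
    fix x assume "x \<in> (\<Union>k\<in>{n..}. A k)"
    then obtain k where "n \<le> k" "x \<in> A k"
      by auto
    thus "x \<in> (\<Union>k. A (k + n))"
      by (intro UN_I[of "k - n"]) auto
  qed auto
  also have "prob (\<Union>k. A (k + n)) \<le> (\<Sum>k. prob (A (k + n)))"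
    using assms(2) summable_prob by (intro finite_measure_subadditive_countably) auto
  also have "\<dots> \<le> (\<Sum>k. Q * (1 / real (Suc k) ^ 2))"
    by (rule suminf_le[OF shifted summable_prob summable_bound])
  also have "\<dots> = Q * (\<Sum>k. 1 / real (Suc k) ^ 2)"
    using summable_inverse_Suc_square by (rule suminf_mult)
  finally show ?thesis .
qed

lemma prob_abs_sum_gt_le_moment:
  fixes X :: "'i \<Rightarrow> 'a \<Rightarrow> real" and g :: "real \<Rightarrow> real" and B T \<epsilon> :: real
  assumes indep: "indep_vars (\<lambda>_. borel) X I" and I: "finite I" "I \<noteq> {}"
    and X: "\<And>i. i \<in> I \<Longrightarrow> integrable M (X i)" "\<And>i. i \<in> I \<Longrightarrow> expectation (X i) = 0"
    and g: "\<And>i. i \<in> I \<Longrightarrow> integrable M (\<lambda>\<omega>. g (X i \<omega>))"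
      "\<And>i. i \<in> I \<Longrightarrow> expectation (\<lambda>\<omega>. g (X i \<omega>)) \<le> B"
      "\<And>x. 0 < g x" "\<And>x y. \<bar>x\<bar> \<le> \<bar>y\<bar> \<Longrightarrow> g x \<le> g y"
    and "0 < T" and tail: "\<And>x. T < \<bar>x\<bar> \<Longrightarrow> T * \<bar>x\<bar> \<le> g x"
    and "0 < \<epsilon>" "2 * B \<le> \<epsilon> * T"
  shows "prob {\<omega>\<in>space M. \<epsilon> * real (card I) < \<bar>\<Sum>i\<in>I. X i \<omega>\<bar>}
           \<le> real (card I) * B / g T + 2 * exp (- (\<epsilon>\<^sup>2 * real (card I) / (8 * T\<^sup>2)))"
proof -
  have "\<bar>expectation (\<lambda>\<omega>. truncate_abs T (X i \<omega>))\<bar> \<le> \<epsilon> / 2" if "i \<in> I" for i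
  proof -
    have "\<bar>expectation (\<lambda>\<omega>. truncate_abs T (X i \<omega>))\<bar> \<le> expectation (\<lambda>\<omega>. g (X i \<omega>)) / T"
      by (rule abs_expectation_truncate_abs_le[OF X[OF that] g(1)[OF that] less_imp_le[OF g(3)] \<open>0 < T\<close> tail])
    also have "\<dots> \<le> B / T"
      using g(2)[OF that] \<open>0 < T\<close> by (simp add: divide_right_mono)
    also have "\<dots> \<le> \<epsilon> / 2"
      using \<open>2 * B \<le> \<epsilon> * T\<close> \<open>0 < T\<close> by (simp add: field_simps)
    finally show ?thesis .
  qed
  hence "(\<Sum>i\<in>I. \<bar>expectation (\<lambda>\<omega>. truncate_abs T (X i \<omega>))\<bar>) \<le> (\<Sum>i\<in>I. \<epsilon> / 2)"
    by (rule sum_mono)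
  hence "(\<Sum>i\<in>I. \<bar>expectation (\<lambda>\<omega>. truncate_abs T (X i \<omega>))\<bar>) \<le> \<epsilon> * real (card I) / 2"
    by (simp add: mult.commute)
  hence "prob {\<omega>\<in>space M. \<epsilon> * real (card I) < \<bar>\<Sum>i\<in>I. X i \<omega>\<bar>}
      \<le> (\<Sum>i\<in>I. prob {\<omega>\<in>space M. T < \<bar>X i \<omega>\<bar>}) + 2 * exp (- ((\<epsilon> * real (card I))\<^sup>2 / (8 * real (card I) * T\<^sup>2)))"
    using I \<open>0 < T\<close> \<open>0 < \<epsilon>\<close> by (intro prob_abs_sum_gt_le_truncation indep) (auto simp: card_gt_0_iff)
  also have "(\<epsilon> * real (card I))\<^sup>2 / (8 * real (card I) * T\<^sup>2) = \<epsilon>\<^sup>2 * real (card I) / (8 * T\<^sup>2)"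
    using I by (simp add: power2_eq_square)
  also have "(\<Sum>i\<in>I. prob {\<omega>\<in>space M. T < \<bar>X i \<omega>\<bar>}) \<le> (\<Sum>i\<in>I. B / g T)"
  proof (intro sum_mono)
    fix i assume "i \<in> I"
    have "prob {\<omega>\<in>space M. T < \<bar>X i \<omega>\<bar>} \<le> expectation (\<lambda>\<omega>. g (X i \<omega>)) / g T"
      using \<open>i \<in> I\<close> \<open>0 < T\<close> g(3,4) by (intro prob_abs_gt_le_expectation g(1)) auto
    also have "\<dots> \<le> B / g T"
      using g(2)[OF \<open>i \<in> I\<close>] g(3)[of T] by (simp add: divide_right_mono)
    finally show "prob {\<omega>\<in>space M. T < \<bar>X i \<omega>\<bar>} \<le> B / g T" .
  qed
  finally show ?thesis
    by simp
qed

lemma eventually_prob_partial_sum_gt_le: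
  fixes X :: "nat \<Rightarrow> 'a \<Rightarrow> real" and K \<gamma> \<epsilon> B :: real
  assumes indep: "indep_vars (\<lambda>_. borel) X UNIV"
    and X: "\<And>i. integrable M (X i)" "\<And>i. expectation (X i) = 0"
    and moment: "\<And>i. integrable M (\<lambda>\<omega>. exp_log_plus_pow K \<gamma> (X i \<omega>))"
      "\<And>i. expectation (\<lambda>\<omega>. exp_log_plus_pow K \<gamma> (X i \<omega>)) \<le> B"
    and "0 < K" "1 < \<gamma>" "0 < \<epsilon>"
  shows "\<exists>c>0. eventually (\<lambda>k. prob {\<omega>\<in>space M. \<epsilon> * real k < \<bar>\<Sum>i\<in>{1..k}. X i \<omega>\<bar>}
                               \<le> exp (- c * ln (real k) powr \<gamma>) / real k ^ 2) sequentially"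
proof (intro exI conjI)
  let ?\<phi> = "exp_log_plus_pow K \<gamma>"
  \<comment> \<open>chosen so that \<open>?\<phi> (k\<^sup>1\<^sup>/\<^sup>4) = exp (2 c ln\<^sup>\<gamma> k)\<close>\<close>
  define c where "c = K / (2 * 4 powr \<gamma>)"
  show "0 < c"
    using \<open>0 < K\<close> by (simp add: c_def)
  have "1 \<le> expectation (\<lambda>\<omega>. ?\<phi> (X 0 \<omega>))"
    using \<open>0 < K\<close> by (intro integral_ge_const moment(1) AE_I2 exp_log_plus_pow_ge_1) simp
  hence "1 \<le> B"
    using moment(2)[of 0] by linarith
  obtain T0 where T0: "\<And>y. T0 \<le> y \<Longrightarrow> y\<^sup>2 \<le> ?\<phi> y"
    using exp_log_plus_pow_ge_square[OF \<open>0 < K\<close> \<open>1 < \<gamma>\<close>] by blast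
  have estimate: "prob {\<omega>\<in>space M. \<epsilon> * real k < \<bar>\<Sum>i\<in>{1..k}. X i \<omega>\<bar>}
      \<le> real k * B / exp (2 * c * ln (real k) powr \<gamma>) + 2 * exp (- (\<epsilon>\<^sup>2 / 8 * sqrt (real k)))"
    if k: "1 \<le> real k" and T: "T0 \<le> sqrt (sqrt (real k))" "2 * B / \<epsilon> \<le> sqrt (sqrt (real k))" for k
  proof -
    define T where "T = sqrt (sqrt (real k))"
    have "1 \<le> T" "0 < T" and T2: "T\<^sup>2 = sqrt (real k)"
      using k by (auto simp: T_def)
    have "ln T = ln (real k) / 4"
      using k by (simp add: T_def ln_sqrt)
    hence "?\<phi> T = exp (K * (ln (real k) / 4) powr \<gamma>)"
      using \<open>1 \<le> T\<close> by (simp only: exp_log_plus_pow_def abs_of_pos[OF \<open>0 < T\<close>] log_plus_eq_ln)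
    also have "\<dots> = exp (2 * c * ln (real k) powr \<gamma>)"
      using k by (simp add: c_def powr_divide)
    finally have \<phi>_T: "?\<phi> T = exp (2 * c * ln (real k) powr \<gamma>)" .
    have T_tail: "T * \<bar>x\<bar> \<le> ?\<phi> x" if "T < \<bar>x\<bar>" for x
    proof -
      have "T * \<bar>x\<bar> \<le> \<bar>x\<bar>\<^sup>2"
        using that mult_right_mono[of T "\<bar>x\<bar>" "\<bar>x\<bar>"] by (simp add: power2_eq_square)
      also have "\<dots> \<le> ?\<phi> x"
        using T0[of "\<bar>x\<bar>"] T(1) that by (simp add: T_def)
      finally show ?thesis .
    qed
    have "2 * B \<le> \<epsilon> * T"
      using T(2) \<open>0 < \<epsilon>\<close> by (simp add: T_def divide_le_eq mult.commute)
    have "prob {\<omega>\<in>space M. \<epsilon> * real (card {1..k}) < \<bar>\<Sum>i\<in>{1..k}. X i \<omega>\<bar>}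
        \<le> real (card {1..k}) * B / ?\<phi> T + 2 * exp (- (\<epsilon>\<^sup>2 * real (card {1..k}) / (8 * T\<^sup>2)))"
      by (rule prob_abs_sum_gt_le_moment)
        (use k \<open>0 < T\<close> \<open>0 < \<epsilon>\<close> \<open>2 * B \<le> \<epsilon> * T\<close> \<open>0 < K\<close> \<open>1 < \<gamma>\<close> T_tail X moment
          in \<open>auto intro: indep_vars_subset[OF indep] exp_log_plus_pow_mono\<close>)
    also have "\<epsilon>\<^sup>2 * real (card {1..k}) / (8 * T\<^sup>2) = \<epsilon>\<^sup>2 / 8 * (real k / sqrt (real k))"
      unfolding T2 by simp
    finally show ?thesis
      by (simp add: \<phi>_T real_div_sqrt)
  qed
  have "eventually (\<lambda>k. 1 \<le> real k \<and> T0 \<le> sqrt (sqrt (real k)) \<and> 2 * B / \<epsilon> \<le> sqrt (sqrt (real k))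
      \<and> real k * B / exp (2 * c * ln (real k) powr \<gamma>) + 2 * exp (- (\<epsilon>\<^sup>2 / 8 * sqrt (real k)))
          \<le> exp (- c * ln (real k) powr \<gamma>) / real k ^ 2) sequentially"
    using \<open>0 < c\<close> \<open>1 \<le> B\<close> \<open>1 < \<gamma>\<close> \<open>0 < \<epsilon>\<close> by (intro eventually_conj; real_asymp)
  thus "eventually (\<lambda>k. prob {\<omega>\<in>space M. \<epsilon> * real k < \<bar>\<Sum>i\<in>{1..k}. X i \<omega>\<bar>}
      \<le> exp (- c * ln (real k) powr \<gamma>) / real k ^ 2) sequentially"
    by (rule eventually_mono) (use estimate in \<open>meson order.trans\<close>)
qed

lemma prob_Union_atLeast_le_exp_ln_powr:
  assumes "\<And>k. A k \<in> events" "0 \<le> \<gamma>" "0 < c0"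
    and "eventually (\<lambda>k. prob (A k) \<le> exp (- c0 * ln (real k) powr \<gamma>) / real k ^ 2) sequentially"
  shows "\<exists>c>0. \<forall>n. prob (\<Union>k\<in>{n..}. A k) \<le> 1 / c * exp (- c * ln (real n) powr \<gamma>)"
proof -
  obtain N where N: "\<And>k. N \<le> k \<Longrightarrow> prob (A k) \<le> exp (- c0 * ln (real k) powr \<gamma>) / real k ^ 2"
    using assms(4) by (auto simp: eventually_sequentially)
  define Z where "Z = (\<Sum>k. 1 / real (Suc k) ^ 2)"
  have "0 \<le> Z"
    unfolding Z_def by (intro suminf_nonneg summable_inverse_Suc_square) simp
  have tail: "prob (\<Union>k\<in>{n..}. A k) \<le> Z * exp (- c0 * ln (real n) powr \<gamma>)" if "max N 1 \<le> n" for n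
  proof -
    have "prob (\<Union>k\<in>{n..}. A k) \<le> exp (- c0 * ln (real n) powr \<gamma>) * Z"
      unfolding Z_def
    proof (rule prob_Union_atLeast_le_inverse_square)
      fix k assume "n \<le> k"
      have "prob (A k) \<le> exp (- c0 * ln (real k) powr \<gamma>) / real k ^ 2"
        using that \<open>n \<le> k\<close> by (intro N) simp
      also have "\<dots> \<le> exp (- c0 * ln (real n) powr \<gamma>) / real k ^ 2"
        using \<open>0 < c0\<close> \<open>n \<le> k\<close> assms(2) ln_powr_mono[of \<gamma> n k] by (intro divide_right_mono) simp_all
      finally show "prob (A k) \<le> exp (- c0 * ln (real n) powr \<gamma>) / real k ^ 2" .
    qed (use that assms(1) in auto)
    thus ?thesis
      by (simp add: mult.commute)
  qed
  show ?thesis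
  proof (rule exists_uniform_exp_bound[where N = "max N 1" and D = "ln (real (max N 1)) powr \<gamma>"
        and p = "\<lambda>n. prob (\<Union>k\<in>{n..}. A k)" and L = "\<lambda>n. ln (real n) powr \<gamma>"])
    show "ln (real n) powr \<gamma> \<le> ln (real (max N 1)) powr \<gamma>" if "n < max N 1" for n
      using that assms(2) by (intro ln_powr_mono) simp_all
  qed (use tail \<open>0 < c0\<close> \<open>0 \<le> Z\<close> in \<open>simp_all add: mult.commute\<close>)
qed

end

theorem lemmaE1:
  fixes M :: "'a measure" and X :: "nat \<Rightarrow> 'a \<Rightarrow> real" and K \<gamma> :: real
  assumes "prob_space M"
    and "prob_space.indep_vars M (\<lambda>_. borel) X UNIV"
    and "\<And>i. integrable M (X i)"
    and "\<And>i. prob_space.expectation M (X i) = 0"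
    and "K > 0" and "\<gamma> > 1"
    and "(SUP i. \<integral>\<^sup>+ \<omega>. ennreal (exp (K * (log_plus \<bar>X i \<omega>\<bar>) powr \<gamma>)) \<partial>M) < \<infinity>"
  shows "\<forall>\<epsilon>>0. \<exists>c>0. \<forall>n::nat.
           measure M {\<omega> \<in> space M. \<exists>k\<ge>n. \<bar>\<Sum>i\<in>{1..k}. X i \<omega>\<bar> > \<epsilon> * real k}
             \<le> (1 / c) * exp (- c * (ln (real n)) powr \<gamma>)"
proof (intro allI impI)
  fix \<epsilon> :: real
  assume "0 < \<epsilon>"
  interpret prob_space M by fact
  have [measurable]: "X i \<in> borel_measurable M" for i
    using assms(2) by (simp add: indep_vars_def)
  obtain B where moment: "\<And>i. integrable M (\<lambda>\<omega>. exp_log_plus_pow K \<gamma> (X i \<omega>))"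
      "\<And>i. expectation (\<lambda>\<omega>. exp_log_plus_pow K \<gamma> (X i \<omega>)) \<le> B"
  proof (rule integrable_integral_le_of_SUP_nn_integral_less_top[where f = "\<lambda>i \<omega>. exp_log_plus_pow K \<gamma> (X i \<omega>)"])
    show "(SUP i. \<integral>\<^sup>+ \<omega>. ennreal (exp_log_plus_pow K \<gamma> (X i \<omega>)) \<partial>M) < \<infinity>"
      using assms(7) by (simp add: exp_log_plus_pow_def)
  qed (auto intro: that less_imp_le)
  obtain c0 where "0 < c0" and "eventually (\<lambda>k. prob {\<omega>\<in>space M. \<epsilon> * real k < \<bar>\<Sum>i\<in>{1..k}. X i \<omega>\<bar>}
      \<le> exp (- c0 * ln (real k) powr \<gamma>) / real k ^ 2) sequentially"
    using eventually_prob_partial_sum_gt_le[OF assms(2-4) moment assms(5,6) \<open>0 < \<epsilon>\<close>] by blast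
  hence "\<exists>c>0. \<forall>n. prob (\<Union>k\<in>{n..}. {\<omega>\<in>space M. \<epsilon> * real k < \<bar>\<Sum>i\<in>{1..k}. X i \<omega>\<bar>})
      \<le> 1 / c * exp (- c * ln (real n) powr \<gamma>)"
    using assms(6) by (intro prob_Union_atLeast_le_exp_ln_powr) auto
  moreover have "{\<omega> \<in> space M. \<exists>k\<ge>n. \<bar>\<Sum>i\<in>{1..k}. X i \<omega>\<bar> > \<epsilon> * real k}
      = (\<Union>k\<in>{n..}. {\<omega>\<in>space M. \<epsilon> * real k < \<bar>\<Sum>i\<in>{1..k}. X i \<omega>\<bar>})" for n
    by auto
  ultimately show "\<exists>c>0. \<forall>n. prob {\<omega> \<in> space M. \<exists>k\<ge>n. \<bar>\<Sum>i\<in>{1..k}. X i \<omega>\<bar> > \<epsilon> * real k}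
      \<le> 1 / c * exp (- c * ln (real n) powr \<gamma>)"
    by simp
qed

end
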